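(* Let $D$ be a CAEXT derivation ending in a configuration $C\neq\mathsf{unsat}$. Then in $C$, for all array terms $a$ and constant array terms $\langle v\rangle$: if $\pi(a,\langle v\rangle)\neq()$, then the formula $$\mathcal R(a,\langle v\rangle)\Rightarrow \forall i{:}\sigma.\ \Big(\bigvee_{k\in I(a,\langle v\rangle)} i\approx k\Big)\vee a[i]\approx v$$ is valid in the theory of extensional constant arrays.
   Context: Theory. Many-sorted first-order logic with equality. There is an index sort $\sigma$, an element sort $\tau$, and an array sort $(\sigma\to\tau)$, with function symbols: read $a[i]$, write $a\langle i\triangleleft u\rangle$, and constant array $\langle v\rangle$. The theory of extensional constant arrays consists of all interpretations satisfying: (row-eq) $\forall a,i,j,u.\ i\approx j\Rightarrow a\langle i\triangleleft u\rangle[j]\approx u$; (row-ne) $\forall a,i,j,u.\ i\not\approx j\Rightarrow a\langle i\triangleleft u\rangle[j]\approx a[j]$; (ext) $\forall a,b.\ a\approx b\Leftrightarrow \forall i.\ a[i]\approx b[i]$; (roc) $\forall i,v.\ \langle v\rangle[i]\approx v$. The empty theory treats all these symbols (and the array sort) as uninterpreted. $T(A)$ is the set of terms occurring in $A$, $T_{\mathcal A}(A)$ the set of array terms in $A$, and $W(A)=\{a\langle i\triangleleft u\rangle[i]\approx u \mid a\langle i\triangleleft u\rangle\in T(A)\}$. Configurations. A configuration is either $\mathsf{unsat}$ or a triple $\langle A,\mathcal I,\pi\rangle$ where $A$ is a set of formulas (with flat literals), $\mathcal I$ is either $\mathcal I_0=\mathsf{none}$ or an interpretation in the empty theory satisfying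 $A$, and $\pi$ maps pairs $(a,t)$ ($a$ an array term, $t$ a read term $b[i]$ or a constant array term $\langle v\rangle$) to either the undefined value $()$ or a pair $(r,c)$ with $r$ a formula and $c$ an array term. $\pi_0$ maps every pair to $()$; the initial configuration for $A$ is $\langle A,\mathcal I_0,\pi_0\rangle$. Reasons. $\mathcal R(a,t)=()$ if $\pi(a,t)=()$; otherwise $\mathcal R(a,t)=\top$ if $t=a$ or $t=a[i]$ for some $i$; otherwise $\mathcal R(a,t)=\mathcal R(c,t)\wedge r$ where $\pi(a,t)=(r,c)$. Updated indices $I(a,\langle v\rangle)$: $()$ if $\pi(a,\langle v\rangle)=()$; $\emptyset$ if $a=\langle v\rangle$; $I(b,\langle v\rangle)\cup\{j\}$ if $\pi(a,\langle v\rangle)=(\top,b)$ with $b=a\langle j\triangleleft u\rangle$ or $a=b\langle j\triangleleft u\rangle$; otherwise $I(c,\langle v\rangle)$ where $\pi(a,\langle v\rangle)=(r,c)$. "$\mathcal I\models\varphi$" refers to the current $\mathcal I$ (empty theory); such premises require $\mathcal I\ne\mathcal I_0$. "Reset" means $(\mathcal I,\pi):=(\mathcal I_0,\pi_0)$. Rules of CAEXT: Interp: if $\mathcal I=\mathcal I_0$ and $\mathcal I'\models A\cup W(A)$ in the empty theory, set $\mathcal I:=\mathcal I'$. Conf: if $A\cup W(A)$ is empty-theory unsatisfiable, derive $\mathsf{unsat}$. InitR: $a[i]\in T(A)$ ⟹ $\pi(a,a[i]):=(\top,a)$. InitW: $s=a\langle i\triangleleft u\rangle\in T(A)$ ⟹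 $\pi(s,s[i]):=(\top,s)$. RowD: $\mathcal I\models i\not\approx j$, $\pi(a\langle j\triangleleft u\rangle,b[i])\ne()$, $\pi(a,b[i])=()$ ⟹ $\pi(a,b[i]):=(i\not\approx j,a\langle j\triangleleft u\rangle)$. RowU: $\mathcal I\models i\not\approx j$, $a\langle j\triangleleft u\rangle\in T(A)$, $\pi(a,b[i])\ne()$, $\pi(a\langle j\triangleleft u\rangle,b[i])=()$ ⟹ $\pi(a\langle j\triangleleft u\rangle,b[i]):=(i\not\approx j,a)$. EqR: $\mathcal I\models a\approx c$, $a,c\in T_{\mathcal A}(A)$, $a\approx c\in T(A)$, $\pi(a,b[i])\ne()$, $\pi(c,b[i])=()$ ⟹ $\pi(c,b[i]):=(a\approx c,a)$. EqL: symmetric, $\pi(a,b[i]):=(a\approx c,c)$. CongR: $\mathcal I\models i\approx k$, $\pi(a,b[i])\ne()$, $\pi(a,c[k])\ne()$, $\mathcal I\models b[i]\not\approx c[k]$ ⟹ add $\mathcal R(a,b[i])\wedge\mathcal R(a,c[k])\wedge i\approx k\Rightarrow b[i]\approx c[k]$ to $A$, reset. DisEq: $\mathcal I\models a\not\approx c$, $a,c\in T_{\mathcal A}(A)$, $a\approx c\in T(A)$, $k_{\{a,c\}}\notin T(A)$ ⟹ add $a\not\approx c\Rightarrow a[k_{\{a,c\}}]\not\approx c[k_{\{a,c\}}]$ (fresh index constant $k_{\{a,c\}}$), reset. Roc: $\pi(\langle v\rangle,b[i])\ne()$, $\mathcal I\models b[i]\not\approx v$ ⟹ add $\mathcal R(\langle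 v\rangle,b[i])\Rightarrow b[i]\approx v$, reset. InitC: $\langle v\rangle\in T(A)$ ⟹ $\pi(\langle v\rangle,\langle v\rangle):=(\top,\langle v\rangle)$. CowD: $\pi(a\langle j\triangleleft u\rangle,\langle v\rangle)\ne()$, $\pi(a,\langle v\rangle)=()$, $\mathcal I\models\exists i{:}\sigma.\bigwedge_{k\in I(a\langle j\triangleleft u\rangle,\langle v\rangle)\cup\{j\}}i\not\approx k$ ⟹ $\pi(a,\langle v\rangle):=(\top,a\langle j\triangleleft u\rangle)$. CowU: $\pi(a,\langle v\rangle)\ne()$, $\pi(a\langle j\triangleleft u\rangle,\langle v\rangle)=()$, $a\langle j\triangleleft u\rangle\in T(A)$, $\mathcal I\models\exists i{:}\sigma.\bigwedge_{k\in I(a,\langle v\rangle)\cup\{j\}}i\not\approx k$ ⟹ $\pi(a\langle j\triangleleft u\rangle,\langle v\rangle):=(\top,a)$. CEqR: $\mathcal I\models a\approx c$, $a,c\in T_{\mathcal A}(A)$, $a\approx c\in T(A)$, $\pi(a,\langle v\rangle)\ne()$, $\pi(c,\langle v\rangle)=()$ ⟹ $\pi(c,\langle v\rangle):=(a\approx c,a)$. CEqL: symmetric, $\pi(a,\langle v\rangle):=(a\approx c,c)$. CongC: $\pi(a,\langle v\rangle)\ne()$, $\pi(a,\langle w\rangle)\ne()$, $\mathcal I\models v\not\approx w$, $\mathcal I\models\exists i{:}\sigma.\bigwedge_{k\in I(a,\langle v\rangle)\cup I(a,\langle w\rangle)}i\not\approx k$ ⟹ add $\mathcal R(a,\langle v\rangle)\wedge\mathcal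 R(a,\langle w\rangle)\wedge\exists i{:}\sigma.\bigwedge_{k\in I(a,\langle v\rangle)\cup I(a,\langle w\rangle)}i\not\approx k\Rightarrow v\approx w$, reset. Conflict rules: CongR, DisEq, Roc, CongC. A derivation is a sequence of configurations starting from an initial configuration, each obtained from the previous by a rule application. *)

theory Defs
  imports Main
begin

text \<open>Index terms are index constants: named constants and the fresh constants k_{a,c}
  introduced by DisEq. Array terms are constants,
  writes a<i <| u>, or constant arrays <v>.\<close>

datatype itrm = IC string | IK atrm atrm
and etrm = EC string | Rd atrm itrm
and atrm = AC string | Wr atrm itrm etrm | K etrm

datatype trm = TI itrm | TE etrm | TA atrm

text \<open>Formulas. ExAvoid S denotes the formula  EX i:sigma. AND_{k in S} i ~= k
  (the only quantified formulas used by the calculus).\<close>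

datatype fm = FTrue | FFalse
  | EqI itrm itrm | EqE etrm etrm | EqA atrm atrm
  | FNot fm | FAnd fm fm | FOr fm fm | FImp fm fm
  | ExAvoid "itrm set"

record ('i,'e,'a) interp =
  iconst :: "string \<Rightarrow> 'i"
  kconst :: "atrm \<Rightarrow> atrm \<Rightarrow> 'i"
  econst :: "string \<Rightarrow> 'e"
  aconst :: "string \<Rightarrow> 'a"
  rdf :: "'a \<Rightarrow> 'i \<Rightarrow> 'e"
  wrf :: "'a \<Rightarrow> 'i \<Rightarrow> 'e \<Rightarrow> 'a"
  kf :: "'e \<Rightarrow> 'a"

primrec evI :: "('i,'e,'a,'z) interp_scheme \<Rightarrow> itrm \<Rightarrow> 'i"
  and evE :: "('i,'e,'a,'z) interp_scheme \<Rightarrow> etrm \<Rightarrow> 'e"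
  and evA :: "('i,'e,'a,'z) interp_scheme \<Rightarrow> atrm \<Rightarrow> 'a" where
  "evI M (IC x) = iconst M x"
| "evI M (IK a c) = kconst M a c"
| "evE M (EC x) = econst M x"
| "evE M (Rd a i) = rdf M (evA M a) (evI M i)"
| "evA M (AC x) = aconst M x"
| "evA M (Wr a i u) = wrf M (evA M a) (evI M i) (evE M u)"
| "evA M (K v) = kf M (evE M v)"

primrec sat :: "('i,'e,'a,'z) interp_scheme \<Rightarrow> fm \<Rightarrow> bool" where
  "sat M FTrue = True"
| "sat M FFalse = False"
| "sat M (EqI s t) = (evI M s = evI M t)"
| "sat M (EqE s t) = (evE M s = evE M t)"
| "sat M (EqA s t) = (evA M s = evA M t)"
| "sat M (FNot \<phi>) = (\<not> sat M \<phi>)"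
| "sat M (FAnd \<phi> \<psi>) = (sat M \<phi> \<and> sat M \<psi>)"
| "sat M (FOr \<phi> \<psi>) = (sat M \<phi> \<or> sat M \<psi>)"
| "sat M (FImp \<phi> \<psi>) = (sat M \<phi> \<longrightarrow> sat M \<psi>)"
| "sat M (ExAvoid S) = (\<exists>d. \<forall>k\<in>S. d \<noteq> evI M k)"

text \<open>Models of the theory of extensional constant arrays (axioms row-eq, row-ne, ext, roc).
  Interpretations of the empty theory are arbitrary interpretations.\<close>

definition ext_const_array_model :: "('i,'e,'a) interp \<Rightarrow> bool" where
  "ext_const_array_model M \<longleftrightarrow>
     (\<forall>a i j u. i = j \<longrightarrow> rdf M (wrf M a i u) j = u)
   \<and> (\<forall>a i j u. i \<noteq> j \<longrightarrow> rdf M (wrf M a i u) j = rdf M a j)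
   \<and> (\<forall>a b. a = b \<longleftrightarrow> (\<forall>i. rdf M a i = rdf M b i))
   \<and> (\<forall>i v. rdf M (kf M v) i = v)"

primrec subI :: "itrm \<Rightarrow> trm set"
  and subE :: "etrm \<Rightarrow> trm set"
  and subA :: "atrm \<Rightarrow> trm set" where
  "subI (IC x) = {TI (IC x)}"
| "subI (IK a c) = {TI (IK a c)}"
| "subE (EC x) = {TE (EC x)}"
| "subE (Rd a i) = {TE (Rd a i)} \<union> subA a \<union> subI i"
| "subA (AC x) = {TA (AC x)}"
| "subA (Wr a i u) = {TA (Wr a i u)} \<union> subA a \<union> subI i \<union> subE u"
| "subA (K v) = {TA (K v)} \<union> subE v"

primrec trms :: "fm \<Rightarrow> trm set" where
  "trms FTrue = {}"
| "trms FFalse = {}"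
| "trms (EqI s t) = subI s \<union> subI t"
| "trms (EqE s t) = subE s \<union> subE t"
| "trms (EqA s t) = subA s \<union> subA t"
| "trms (FNot \<phi>) = trms \<phi>"
| "trms (FAnd \<phi> \<psi>) = trms \<phi> \<union> trms \<psi>"
| "trms (FOr \<phi> \<psi>) = trms \<phi> \<union> trms \<psi>"
| "trms (FImp \<phi> \<psi>) = trms \<phi> \<union> trms \<psi>"
| "trms (ExAvoid S) = (\<Union>k\<in>S. subI k)"

primrec atms :: "fm \<Rightarrow> fm set" where
  "atms FTrue = {}"
| "atms FFalse = {}"
| "atms (EqI s t) = {EqI s t}"
| "atms (EqE s t) = {EqE s t}"
| "atms (EqA s t) = {EqA s t}"
| "atms (FNot \<phi>) = atms \<phi>"
| "atms (FAnd \<phi> \<psi>) = atms \<phi> \<union> atms \<psi>"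
| "atms (FOr \<phi> \<psi>) = atms \<phi> \<union> atms \<psi>"
| "atms (FImp \<phi> \<psi>) = atms \<phi> \<union> atms \<psi>"
| "atms (ExAvoid S) = {}"

definition T :: "fm set \<Rightarrow> trm set" where
  "T A = (\<Union>\<phi>\<in>A. trms \<phi>)"

definition W :: "fm set \<Rightarrow> fm set" where
  "W A = {EqE (Rd (Wr a i u) i) u | a i u. TA (Wr a i u) \<in> T A}"

fun is_const_e :: "etrm \<Rightarrow> bool" where
  "is_const_e (EC _) = True" | "is_const_e _ = False"

fun is_const_a :: "atrm \<Rightarrow> bool" where
  "is_const_a (AC _) = True" | "is_const_a _ = False"

fun flatE :: "etrm \<Rightarrow> bool" where
  "flatE (EC _) = True"
| "flatE (Rd a i) = is_const_a a"

fun flatA :: "atrm \<Rightarrow> bool" where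
  "flatA (AC _) = True"
| "flatA (Wr a i u) = (is_const_a a \<and> is_const_e u)"
| "flatA (K v) = is_const_e v"

primrec flat_fm :: "fm \<Rightarrow> bool" where
  "flat_fm FTrue = True"
| "flat_fm FFalse = True"
| "flat_fm (EqI s t) = True"
| "flat_fm (EqE s t) = (flatE s \<and> flatE t)"
| "flat_fm (EqA s t) = (flatA s \<and> flatA t)"
| "flat_fm (FNot \<phi>) = flat_fm \<phi>"
| "flat_fm (FAnd \<phi> \<psi>) = (flat_fm \<phi> \<and> flat_fm \<psi>)"
| "flat_fm (FOr \<phi> \<psi>) = (flat_fm \<phi> \<and> flat_fm \<psi>)"
| "flat_fm (FImp \<phi> \<psi>) = (flat_fm \<phi> \<and> flat_fm \<psi>)"
| "flat_fm (ExAvoid S) = True"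

type_synonym pimap = "atrm \<times> trm \<Rightarrow> (fm \<times> atrm) option"

datatype ('i,'e,'a) config = Unsat | Cfg "fm set" "('i,'e,'a) interp option" pimap

definition pi0 :: pimap where "pi0 = (\<lambda>_. None)"

definition init_config :: "fm set \<Rightarrow> ('i,'e,'a) config" where
  "init_config A = Cfg A None pi0"

text \<open>I |= phi, requiring I ~= I_0.\<close>
definition holds :: "('i,'e,'a) interp option \<Rightarrow> fm \<Rightarrow> bool" where
  "holds I \<phi> = (case I of None \<Rightarrow> False | Some M \<Rightarrow> sat M \<phi>)"

text \<open>Reasons R(a,t), as a relation (reason pi a t r  iff  R(a,t) = r, R(a,t) ~= ()).\<close>
inductive reason :: "pimap \<Rightarrow> atrm \<Rightarrow> trm \<Rightarrow> fm \<Rightarrow> bool" for \<pi> where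
  base: "\<pi> (a, t) \<noteq> None \<Longrightarrow> t = TA a \<or> (\<exists>i. t = TE (Rd a i)) \<Longrightarrow> reason \<pi> a t FTrue"
| step: "\<pi> (a, t) = Some (r, c) \<Longrightarrow> \<not> (t = TA a \<or> (\<exists>i. t = TE (Rd a i)))
         \<Longrightarrow> reason \<pi> c t r' \<Longrightarrow> reason \<pi> a t (FAnd r' r)"

text \<open>Updated indices I(a,<v>), as a relation (updidx pi a v S  iff  I(a,<v>) = S ~= ()).\<close>
inductive updidx :: "pimap \<Rightarrow> atrm \<Rightarrow> etrm \<Rightarrow> itrm set \<Rightarrow> bool" for \<pi> where
  base: "\<pi> (a, TA (K v)) \<noteq> None \<Longrightarrow> a = K v \<Longrightarrow> updidx \<pi> a v {}"
| wr: "\<pi> (a, TA (K v)) = Some (FTrue, b) \<Longrightarrow> a \<noteq> K v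
       \<Longrightarrow> (\<exists>u. b = Wr a j u \<or> a = Wr b j u)
       \<Longrightarrow> updidx \<pi> b v S \<Longrightarrow> updidx \<pi> a v (insert j S)"
| other: "\<pi> (a, TA (K v)) = Some (r, c) \<Longrightarrow> a \<noteq> K v
       \<Longrightarrow> \<not> (r = FTrue \<and> (\<exists>j u. c = Wr a j u \<or> a = Wr c j u))
       \<Longrightarrow> updidx \<pi> c v S \<Longrightarrow> updidx \<pi> a v S"

inductive caext_step :: "('i,'e,'a) config \<Rightarrow> ('i,'e,'a) config \<Rightarrow> bool" where
  Interp: "(\<forall>\<phi>\<in>A \<union> W A. sat M \<phi>) \<Longrightarrow> caext_step (Cfg A None \<pi>) (Cfg A (Some M) \<pi>)"
| Conf: "\<not> (\<exists>M::('i,'e,'a) interp. \<forall>\<phi>\<in>A \<union> W A. sat M \<phi>)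
         \<Longrightarrow> caext_step (Cfg A I \<pi>) Unsat"
| InitR: "TE (Rd a i) \<in> T A
         \<Longrightarrow> caext_step (Cfg A I \<pi>) (Cfg A I (\<pi>((a, TE (Rd a i)) := Some (FTrue, a))))"
| InitW: "s = Wr a i u \<Longrightarrow> TA s \<in> T A
         \<Longrightarrow> caext_step (Cfg A I \<pi>) (Cfg A I (\<pi>((s, TE (Rd s i)) := Some (FTrue, s))))"
| RowD: "holds I (FNot (EqI i j)) \<Longrightarrow> \<pi> (Wr a j u, TE (Rd b i)) \<noteq> None
         \<Longrightarrow> \<pi> (a, TE (Rd b i)) = None
         \<Longrightarrow> caext_step (Cfg A I \<pi>)
               (Cfg A I (\<pi>((a, TE (Rd b i)) := Some (FNot (EqI i j), Wr a j u))))"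
| RowU: "holds I (FNot (EqI i j)) \<Longrightarrow> TA (Wr a j u) \<in> T A
         \<Longrightarrow> \<pi> (a, TE (Rd b i)) \<noteq> None \<Longrightarrow> \<pi> (Wr a j u, TE (Rd b i)) = None
         \<Longrightarrow> caext_step (Cfg A I \<pi>)
               (Cfg A I (\<pi>((Wr a j u, TE (Rd b i)) := Some (FNot (EqI i j), a))))"
| EqR: "holds I (EqA a c) \<Longrightarrow> TA a \<in> T A \<Longrightarrow> TA c \<in> T A
         \<Longrightarrow> EqA a c \<in> (\<Union>\<phi>\<in>A. atms \<phi>)
         \<Longrightarrow> \<pi> (a, TE (Rd b i)) \<noteq> None \<Longrightarrow> \<pi> (c, TE (Rd b i)) = None
         \<Longrightarrow> caext_step (Cfg A I \<pi>) (Cfg A I (\<pi>((c, TE (Rd b i)) := Some (EqA a c, a))))"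
| EqL: "holds I (EqA a c) \<Longrightarrow> TA a \<in> T A \<Longrightarrow> TA c \<in> T A
         \<Longrightarrow> EqA a c \<in> (\<Union>\<phi>\<in>A. atms \<phi>)
         \<Longrightarrow> \<pi> (c, TE (Rd b i)) \<noteq> None \<Longrightarrow> \<pi> (a, TE (Rd b i)) = None
         \<Longrightarrow> caext_step (Cfg A I \<pi>) (Cfg A I (\<pi>((a, TE (Rd b i)) := Some (EqA a c, c))))"
| CongR: "holds I (EqI i k) \<Longrightarrow> \<pi> (a, TE (Rd b i)) \<noteq> None \<Longrightarrow> \<pi> (a, TE (Rd c k)) \<noteq> None
         \<Longrightarrow> holds I (FNot (EqE (Rd b i) (Rd c k)))
         \<Longrightarrow> reason \<pi> a (TE (Rd b i)) r1 \<Longrightarrow> reason \<pi> a (TE (Rd c k)) r2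
         \<Longrightarrow> caext_step (Cfg A I \<pi>)
               (Cfg (insert (FImp (FAnd (FAnd r1 r2) (EqI i k)) (EqE (Rd b i) (Rd c k))) A)
                    None pi0)"
| DisEq: "holds I (FNot (EqA a c)) \<Longrightarrow> TA a \<in> T A \<Longrightarrow> TA c \<in> T A
         \<Longrightarrow> EqA a c \<in> (\<Union>\<phi>\<in>A. atms \<phi>)
         \<Longrightarrow> TI (IK a c) \<notin> T A \<Longrightarrow> TI (IK c a) \<notin> T A
         \<Longrightarrow> caext_step (Cfg A I \<pi>)
               (Cfg (insert (FImp (FNot (EqA a c))
                                  (FNot (EqE (Rd a (IK a c)) (Rd c (IK a c))))) A)
                    None pi0)"
| Roc: "\<pi> (K v, TE (Rd b i)) \<noteq> None \<Longrightarrow> holds I (FNot (EqE (Rd b i) v))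
         \<Longrightarrow> reason \<pi> (K v) (TE (Rd b i)) r
         \<Longrightarrow> caext_step (Cfg A I \<pi>) (Cfg (insert (FImp r (EqE (Rd b i) v)) A) None pi0)"
| InitC: "TA (K v) \<in> T A
         \<Longrightarrow> caext_step (Cfg A I \<pi>) (Cfg A I (\<pi>((K v, TA (K v)) := Some (FTrue, K v))))"
| CowD: "\<pi> (Wr a j u, TA (K v)) \<noteq> None \<Longrightarrow> \<pi> (a, TA (K v)) = None
         \<Longrightarrow> updidx \<pi> (Wr a j u) v S \<Longrightarrow> holds I (ExAvoid (insert j S))
         \<Longrightarrow> caext_step (Cfg A I \<pi>) (Cfg A I (\<pi>((a, TA (K v)) := Some (FTrue, Wr a j u))))"
| CowU: "\<pi> (a, TA (K v)) \<noteq> None \<Longrightarrow> \<pi> (Wr a j u, TA (K v)) = None \<Longrightarrow> TA (Wr a j u) \<in> T A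
         \<Longrightarrow> updidx \<pi> a v S \<Longrightarrow> holds I (ExAvoid (insert j S))
         \<Longrightarrow> caext_step (Cfg A I \<pi>) (Cfg A I (\<pi>((Wr a j u, TA (K v)) := Some (FTrue, a))))"
| CEqR: "holds I (EqA a c) \<Longrightarrow> TA a \<in> T A \<Longrightarrow> TA c \<in> T A
         \<Longrightarrow> EqA a c \<in> (\<Union>\<phi>\<in>A. atms \<phi>)
         \<Longrightarrow> \<pi> (a, TA (K v)) \<noteq> None \<Longrightarrow> \<pi> (c, TA (K v)) = None
         \<Longrightarrow> caext_step (Cfg A I \<pi>) (Cfg A I (\<pi>((c, TA (K v)) := Some (EqA a c, a))))"
| CEqL: "holds I (EqA a c) \<Longrightarrow> TA a \<in> T A \<Longrightarrow> TA c \<in> T A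
         \<Longrightarrow> EqA a c \<in> (\<Union>\<phi>\<in>A. atms \<phi>)
         \<Longrightarrow> \<pi> (c, TA (K v)) \<noteq> None \<Longrightarrow> \<pi> (a, TA (K v)) = None
         \<Longrightarrow> caext_step (Cfg A I \<pi>) (Cfg A I (\<pi>((a, TA (K v)) := Some (EqA a c, c))))"
| CongC: "\<pi> (a, TA (K v)) \<noteq> None \<Longrightarrow> \<pi> (a, TA (K w)) \<noteq> None
         \<Longrightarrow> holds I (FNot (EqE v w))
         \<Longrightarrow> updidx \<pi> a v S1 \<Longrightarrow> updidx \<pi> a w S2
         \<Longrightarrow> holds I (ExAvoid (S1 \<union> S2))
         \<Longrightarrow> reason \<pi> a (TA (K v)) r1 \<Longrightarrow> reason \<pi> a (TA (K w)) r2
         \<Longrightarrow> caext_step (Cfg A I \<pi>)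
               (Cfg (insert (FImp (FAnd (FAnd r1 r2) (ExAvoid (S1 \<union> S2))) (EqE v w)) A)
                    None pi0)"

definition caext_derivation_ends_in :: "('i,'e,'a) config \<Rightarrow> bool" where
  "caext_derivation_ends_in C \<longleftrightarrow>
     (\<exists>A0. (\<forall>\<phi>\<in>A0. flat_fm \<phi>) \<and> caext_step\<^sup>*\<^sup>* (init_config A0) C)"

text \<open>Validity in the theory of extensional constant arrays of
  R => ALL i:sigma. (OR_{k in S} i = k) | a[i] = v,  written out semantically.\<close>
definition valid_cow_invariant ::
  "('i \<times> 'e \<times> 'a) itself \<Rightarrow> fm \<Rightarrow> itrm set \<Rightarrow> atrm \<Rightarrow> etrm \<Rightarrow> bool" where
  "valid_cow_invariant _ r S a v \<longleftrightarrow>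
     (\<forall>M::('i,'e,'a) interp. ext_const_array_model M \<longrightarrow> sat M r \<longrightarrow>
        (\<forall>i. (\<exists>k\<in>S. i = evI M k) \<or> rdf M (evA M a) i = evE M v))"

end

theory Submission
  imports Defs
begin

text \<open>The defined entries \<open>\<pi>(a,\<langle>v\<rangle>)\<close> form chains of links that end at the root \<open>\<langle>v\<rangle>\<close>.
  Every link from \<open>a\<close> to \<open>c\<close> is either a write link (one of \<open>a\<close>, \<open>c\<close> is a write of the
  other at some \<open>j\<close>, reason \<open>\<top>\<close>) or an equality link (reason \<open>a \<approx> c\<close> or \<open>c \<approx> a\<close>). Arrays joined by a
  write link agree outside \<open>j\<close>, and arrays joined by an equality link are equal under its
  reason, so by induction along the chain \<open>a\<close> agrees with \<open>\<langle>v\<rangle>\<close> outside \<open>I(a,\<langle>v\<rangle>)\<close>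
  whenever \<open>\<R>(a,\<langle>v\<rangle>)\<close> holds. That every entry is such a link, and that its chain reaches the
  root, is preserved by every rule: the conflict rules reset \<open>\<pi>\<close>, and the other rules only
  add links to already defined entries.\<close>

definition cow_links_justified :: "pimap \<Rightarrow> bool" where
  "cow_links_justified \<pi> \<longleftrightarrow> (\<forall>x w r c. \<pi> (x, TA (K w)) = Some (r, c) \<longrightarrow>
     x = K w \<or> (r = FTrue \<and> (\<exists>j u. c = Wr x j u \<or> x = Wr c j u)) \<or> r = EqA x c \<or> r = EqA c x)"

text \<open>Since \<^const>\<open>reason\<close> and \<^const>\<open>updidx\<close> are inductive, they have a value at an entry
  only if the chain of links starting there reaches the root.\<close>

definition cow_links_grounded :: "pimap \<Rightarrow> bool" where
  "cow_links_grounded \<pi> \<longleftrightarrow> (\<forall>x w. \<pi> (x, TA (K w)) \<noteq> None \<longrightarrow>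
     (\<exists>r. reason \<pi> x (TA (K w)) r) \<and> (\<exists>S. updidx \<pi> x w S))"

text \<open>Root entries may be overwritten (by InitC): only their definedness is ever consulted.\<close>

definition cow_extends :: "pimap \<Rightarrow> pimap \<Rightarrow> bool" where
  "cow_extends \<pi> \<pi>' \<longleftrightarrow> (\<forall>b w. \<pi> (b, TA (K w)) \<noteq> None \<longrightarrow>
     \<pi>' (b, TA (K w)) \<noteq> None \<and> (b \<noteq> K w \<longrightarrow> \<pi>' (b, TA (K w)) = \<pi> (b, TA (K w))))"

definition cow_inv :: "('i,'e,'a) config \<Rightarrow> bool" where
  "cow_inv C \<longleftrightarrow> (\<forall>A I \<pi>. C = Cfg A I \<pi> \<longrightarrow> cow_links_justified \<pi> \<and> cow_links_grounded \<pi>)"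

lemma reason_cow_extends:
  assumes "cow_extends \<pi> \<pi>'" and "reason \<pi> a (TA (K v)) r"
  shows "reason \<pi>' a (TA (K v)) r"
  using assms(2)
proof (induction a "TA (K v)" r rule: reason.induct)
  case (base a)
  then show ?case
    using assms(1) by (auto simp: cow_extends_def intro: reason.base)
next
  case (step a r c r')
  then have "\<pi>' (a, TA (K v)) = Some (r, c)"
    using assms(1) unfolding cow_extends_def by (metis option.simps(3))
  with step show ?case by (auto intro: reason.step)
qed

lemma updidx_cow_extends:
  assumes "cow_extends \<pi> \<pi>'" and "updidx \<pi> a v S"
  shows "updidx \<pi>' a v S"
  using assms(2)
proof (induction rule: updidx.induct)
  case (base a v)
  then show ?case
    using assms(1) by (auto simp: cow_extends_def intro: updidx.base)
next
  case (wr a v b j S)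
  then have "\<pi>' (a, TA (K v)) = Some (FTrue, b)"
    using assms(1) unfolding cow_extends_def by (metis option.simps(3))
  with wr show ?case by (auto intro: updidx.wr)
next
  case (other a v r c S)
  then have "\<pi>' (a, TA (K v)) = Some (r, c)"
    using assms(1) unfolding cow_extends_def by (metis option.simps(3))
  with other show ?case by (auto intro: updidx.other)
qed

lemma cow_links_grounded_extend:
  assumes grounded: "cow_links_grounded \<pi>" and ext: "cow_extends \<pi> \<pi>'"
    and new: "\<And>x w r c. \<pi>' (x, TA (K w)) = Some (r, c) \<Longrightarrow> \<pi> (x, TA (K w)) = None \<Longrightarrow>
        x = K w \<or> \<pi> (c, TA (K w)) \<noteq> None"
  shows "cow_links_grounded \<pi>'"
  unfolding cow_links_grounded_def
proof (intro allI impI)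
  fix x w
  assume "\<pi>' (x, TA (K w)) \<noteq> None"
  then obtain r0 c where x: "\<pi>' (x, TA (K w)) = Some (r0, c)" by auto
  have transfer: "(\<exists>r. reason \<pi>' y (TA (K w)) r) \<and> (\<exists>S. updidx \<pi>' y w S)"
    if "\<pi> (y, TA (K w)) \<noteq> None" for y
    using that grounded reason_cow_extends[OF ext] updidx_cow_extends[OF ext]
    unfolding cow_links_grounded_def by blast
  consider "\<pi> (x, TA (K w)) \<noteq> None" | "x = K w" | "x \<noteq> K w" "\<pi> (c, TA (K w)) \<noteq> None"
    using new[OF x] by blast
  then show "(\<exists>r. reason \<pi>' x (TA (K w)) r) \<and> (\<exists>S. updidx \<pi>' x w S)"
  proof cases
    case 1
    then show ?thesis by (rule transfer)
  next
    case 2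
    then show ?thesis using x by (auto intro: reason.base updidx.base)
  next
    case 3
    obtain rc Sc where rc: "reason \<pi>' c (TA (K w)) rc" and Sc: "updidx \<pi>' c w Sc"
      using transfer[OF 3(2)] by blast
    have "reason \<pi>' x (TA (K w)) (FAnd rc r0)"
      using x 3(1) rc by (auto intro: reason.step)
    moreover have "\<exists>S. updidx \<pi>' x w S"
    proof (cases "r0 = FTrue \<and> (\<exists>j u. c = Wr x j u \<or> x = Wr c j u)")
      case True
      then obtain j u where "c = Wr x j u \<or> x = Wr c j u" by blast
      then have "updidx \<pi>' x w (insert j Sc)"
        using True x 3(1) Sc by (intro updidx.wr[of _ _ _ c]) auto
      then show ?thesis by blast
    next
      case False
      then show ?thesis using updidx.other[OF x 3(1) False Sc] by blast
    qed
    ultimately show ?thesis by blast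
  qed
qed

lemma cow_links_upd_TE:
  assumes "cow_links_justified \<pi>" and "cow_links_grounded \<pi>"
  shows "cow_links_justified (\<pi>((b, TE e) := y)) \<and> cow_links_grounded (\<pi>((b, TE e) := y))"
proof
  show "cow_links_justified (\<pi>((b, TE e) := y))"
    using assms(1) by (simp add: cow_links_justified_def)
  have "cow_extends \<pi> (\<pi>((b, TE e) := y))"
    by (simp add: cow_extends_def)
  then show "cow_links_grounded (\<pi>((b, TE e) := y))"
    by (rule cow_links_grounded_extend[OF assms(2)]) auto
qed

lemma cow_links_upd_root:
  fixes w :: etrm
  assumes "cow_links_justified \<pi>" and "cow_links_grounded \<pi>"
  defines "\<pi>' \<equiv> \<pi>((K w, TA (K w)) := Some (FTrue, K w))"
  shows "cow_links_justified \<pi>' \<and> cow_links_grounded \<pi>'"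
proof
  show "cow_links_justified \<pi>'"
    using assms(1) by (simp add: \<pi>'_def cow_links_justified_def)
  have "cow_extends \<pi> \<pi>'"
    by (simp add: \<pi>'_def cow_extends_def)
  then show "cow_links_grounded \<pi>'"
    by (rule cow_links_grounded_extend[OF assms(2)]) (auto simp: \<pi>'_def split: if_splits)
qed

lemma cow_links_upd_link:
  assumes "cow_links_justified \<pi>" and "cow_links_grounded \<pi>"
    and "\<pi> (x, TA (K w)) = None" and "\<pi> (c, TA (K w)) \<noteq> None"
    and "r = FTrue \<and> (\<exists>j u. c = Wr x j u \<or> x = Wr c j u) \<or> r = EqA x c \<or> r = EqA c x"
  defines "\<pi>' \<equiv> \<pi>((x, TA (K w)) := Some (r, c))"
  shows "cow_links_justified \<pi>' \<and> cow_links_grounded \<pi>'"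
proof
  show "cow_links_justified \<pi>'"
    using assms(1,5) by (auto simp: \<pi>'_def cow_links_justified_def)
  have "cow_extends \<pi> \<pi>'"
    using assms(3) by (auto simp: \<pi>'_def cow_extends_def)
  then show "cow_links_grounded \<pi>'"
    by (rule cow_links_grounded_extend[OF assms(2)]) (use assms(3,4) in \<open>auto simp: \<pi>'_def split: if_splits\<close>)
qed

lemma caext_step_cow_inv:
  assumes "caext_step C C'" and "cow_inv C"
  shows "cow_inv C'"
  using assms
proof (induction rule: caext_step.induct)
  case (InitR a i A I \<pi>)
  then show ?case by (simp add: cow_inv_def cow_links_upd_TE)
next
  case (InitW s a i u A I \<pi>)
  then show ?case by (simp add: cow_inv_def cow_links_upd_TE)
next
  case (RowD I i j \<pi> a u b A)
  then show ?case by (simp add: cow_inv_def cow_links_upd_TE)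
next
  case (RowU I i j a u A \<pi> b)
  then show ?case by (simp add: cow_inv_def cow_links_upd_TE)
next
  case (EqR I a c A \<pi> b i)
  then show ?case by (simp add: cow_inv_def cow_links_upd_TE)
next
  case (EqL I a c A \<pi> b i)
  then show ?case by (simp add: cow_inv_def cow_links_upd_TE)
next
  case (InitC v A I \<pi>)
  then show ?case by (simp add: cow_inv_def cow_links_upd_root)
next
  case (CowD \<pi> a j u v S I A)
  then show ?case by (simp add: cow_inv_def cow_links_upd_link)
next
  case (CowU \<pi> a v j u A S I)
  then show ?case by (simp add: cow_inv_def cow_links_upd_link)
next
  case (CEqR I a c A \<pi> v)
  then show ?case by (simp add: cow_inv_def cow_links_upd_link)
next
  case (CEqL I a c A \<pi> v)
  then show ?case by (simp add: cow_inv_def cow_links_upd_link)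
qed (simp_all add: cow_inv_def cow_links_justified_def cow_links_grounded_def pi0_def)

lemma caext_derivation_cow_inv:
  fixes C :: "('i,'e,'a) config"
  assumes "caext_derivation_ends_in C"
  shows "cow_inv C"
proof -
  obtain A0 where "caext_step\<^sup>*\<^sup>* (init_config A0) C"
    using assms unfolding caext_derivation_ends_in_def by blast
  moreover have "cow_inv (init_config A0 :: ('i,'e,'a) config)"
    by (simp add: cow_inv_def init_config_def cow_links_justified_def cow_links_grounded_def pi0_def)
  ultimately show ?thesis
    by (induction rule: rtranclp_induct) (auto intro: caext_step_cow_inv)
qed

lemma valid_cow_invariant_root:
  "valid_cow_invariant TYPE('i \<times> 'e \<times> 'a) r {} (K v) v"
  by (simp add: valid_cow_invariant_def ext_const_array_model_def)

lemma valid_cow_invariant_write_link: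
  assumes "valid_cow_invariant TYPE('i \<times> 'e \<times> 'a) r S b v"
    and "b = Wr a j u \<or> a = Wr b j u"
  shows "valid_cow_invariant TYPE('i \<times> 'e \<times> 'a) (FAnd r FTrue) (insert j S) a v"
  unfolding valid_cow_invariant_def
proof (intro allI impI)
  fix M :: "('i,'e,'a) interp" and i
  assume M: "ext_const_array_model M" and "sat M (FAnd r FTrue)"
  then have b: "(\<exists>k\<in>S. i = evI M k) \<or> rdf M (evA M b) i = evE M v"
    using assms(1) unfolding valid_cow_invariant_def by simp
  show "(\<exists>k\<in>insert j S. i = evI M k) \<or> rdf M (evA M a) i = evE M v"
  proof (cases "i = evI M j")
    case False
    then have "rdf M (evA M a) i = rdf M (evA M b) i"
      using assms(2) M unfolding ext_const_array_model_def by auto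
    then show ?thesis using b by auto
  qed simp
qed

lemma valid_cow_invariant_eq_link:
  assumes "valid_cow_invariant TYPE('i \<times> 'e \<times> 'a) r S c v"
    and "r0 = EqA a c \<or> r0 = EqA c a"
  shows "valid_cow_invariant TYPE('i \<times> 'e \<times> 'a) (FAnd r r0) S a v"
  using assms unfolding valid_cow_invariant_def by fastforce

lemma updidx_valid_cow_invariant:
  assumes "cow_links_justified \<pi>" and "updidx \<pi> a v S" and "reason \<pi> a (TA (K v)) r"
  shows "valid_cow_invariant TYPE('i \<times> 'e \<times> 'a) r S a v"
  using assms(2,3)
proof (induction arbitrary: r rule: updidx.induct)
  case (base a v)
  then show ?case by (simp add: valid_cow_invariant_root)
next
  case (wr a v b j S)
  then obtain r' where "r = FAnd r' FTrue" and "reason \<pi> b (TA (K v)) r'"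
    by (auto elim: reason.cases)
  with wr show ?case by (auto intro: valid_cow_invariant_write_link)
next
  case (other a v r0 c S)
  then obtain r' where "r = FAnd r' r0" and "reason \<pi> c (TA (K v)) r'"
    by (auto elim: reason.cases)
  moreover have "r0 = EqA a c \<or> r0 = EqA c a"
    using assms(1) other.hyps(1-3) unfolding cow_links_justified_def by blast
  ultimately show ?case using other.IH by (auto intro: valid_cow_invariant_eq_link)
qed

theorem mainTheorem6:
  fixes C :: "('i,'e,'a) config" and A :: "fm set" and I :: "('i,'e,'a) interp option"
    and \<pi> :: pimap and a :: atrm and v :: etrm
  assumes "caext_derivation_ends_in C"
    and "C = Cfg A I \<pi>"
    and "\<pi> (a, TA (K v)) \<noteq> None"
  shows "(\<exists>r S. reason \<pi> a (TA (K v)) r \<and> updidx \<pi> a v S)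
       \<and> (\<forall>r S. reason \<pi> a (TA (K v)) r \<longrightarrow> updidx \<pi> a v S \<longrightarrow>
             valid_cow_invariant TYPE('j \<times> 'f \<times> 'b) r S a v)"
proof -
  have "cow_links_justified \<pi>" and "cow_links_grounded \<pi>"
    using caext_derivation_cow_inv[OF assms(1)] assms(2) by (auto simp: cow_inv_def)
  then show ?thesis
    using assms(3) updidx_valid_cow_invariant unfolding cow_links_grounded_def by blast
qed

end
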